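(* Let $0<\alpha<2$, $\alpha\neq 1$ or $\alpha=1$, let $\beta\in[-1,1]$, let $d\ge 1$ be an integer and $v\in\mathbb{R}$. Let $g_{\alpha,d}(v,\beta)$, $\beta_B$, $\theta_B$ and $h^{n}(\cdot\,;\alpha,\beta)$ be as defined in the context. Put $x=\left(\cos\left(\tfrac{\pi}{2}\alpha\theta_B\right)\right)^{1/\alpha}v$ (for $\alpha\neq1$) and $y=\tfrac{\pi}{2}v+\beta\log\tfrac{\pi}{2}$ (for $\alpha=1$). Then $$ g_{\alpha,d}(v,\beta)=\begin{cases} \mathrm{Re}\ \dfrac{\left(\cos\left(\frac{\pi}{2}\alpha\theta_B\right)\right)^{d/\alpha}}{2^d(\pi i)^{d-1}}\, h^{d-1}(|x|;\alpha,\beta_B^\ast), & \alpha\neq 1,\\[2mm] \mathrm{Re}\ \dfrac{\pi}{4^d i^{d-1}}\, h^{d-1}(y^\ast;1,|\beta|), & \alpha=1, \end{cases} $$ where $\beta_B^\ast=\beta_B\,\mathrm{sign}\,x$ and $y^\ast=y\,\mathrm{sign}\,\beta$, with the convention $\mathrm{sign}(w)=1$ for $w\ge 0$ and $\mathrm{sign}(w)=-1$ for $w<0$.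
   Context: For $0<\alpha<2$, $\beta\in[-1,1]$, integer $d\ge1$ and $v\in\mathbb{R}$ define $$ g_{\alpha,d}(v,\beta)=\begin{cases}\frac{1}{(2\pi)^d}\int_0^\infty \cos\left(vu-\left(\beta\tan\frac{\pi\alpha}{2}\right)u^\alpha\right)u^{d-1}e^{-u^\alpha}\,du, & \alpha\neq1,\\ \frac{1}{(2\pi)^d}\int_0^\infty\cos\left(vu+\frac{2}{\pi}\beta u\log u\right)u^{d-1}e^{-u}\,du, & \alpha=1.\end{cases} $$ Let $K(\alpha)=\alpha-1+\mathrm{sign}(1-\alpha)$ for $\alpha\ne1$. For $\alpha\neq1$ set $\beta_B=\frac{2}{\pi K(\alpha)}\arctan\left(\beta\tan\frac{\pi\alpha}{2}\right)$ and $\theta_B=\beta_BK(\alpha)/\alpha$. For a parameter $\beta\in[-1,1]$ and $\alpha\neq1$ put $\theta=\theta(\beta)=\beta K(\alpha)/\alpha$. For real $z>0$ define $$ \psi(z;\alpha,\beta)=\begin{cases}-z^\alpha\exp\left(-i\frac{\pi}{2}\theta\alpha\right),&\alpha\ne1,\\ -\frac{\pi}{2}z-i\beta z\log z,&\alpha=1,\end{cases} $$ (with $\theta=\beta K(\alpha)/\alpha$ computed from the third argument of $\psi$), and for integer $n\ge0$ and real $x$, $$ h^n(x;\alpha,\beta)=\frac{1}{\pi}\int_0^\infty (iz)^n\exp\left(izx+\psi(z;\alpha,-\beta)\right)dz . $$ *)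

theory Defs
  imports "HOL-Analysis.Analysis"
begin

definition sgnp :: "real \<Rightarrow> real" where
  "sgnp w = (if w \<ge> 0 then 1 else -1)"

text \<open>K(alpha) = alpha - 1 + sign(1 - alpha), used only for alpha \<noteq> 1.\<close>
definition Kfun :: "real \<Rightarrow> real" where
  "Kfun \<alpha> = \<alpha> - 1 + sgn (1 - \<alpha>)"

definition g_fun :: "real \<Rightarrow> nat \<Rightarrow> real \<Rightarrow> real \<Rightarrow> real" where
  "g_fun \<alpha> d v \<beta> =
    (if \<alpha> \<noteq> 1 then
       (1 / (2 * pi) ^ d) *
       (LINT u:{0<..}|lborel. cos (v * u - (\<beta> * tan (pi * \<alpha> / 2)) * u powr \<alpha>)
                              * u ^ (d - 1) * exp (- (u powr \<alpha>)))
     else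
       (1 / (2 * pi) ^ d) *
       (LINT u:{0<..}|lborel. cos (v * u + (2 / pi) * \<beta> * u * ln u)
                              * u ^ (d - 1) * exp (- u)))"

definition beta_B :: "real \<Rightarrow> real \<Rightarrow> real" where
  "beta_B \<alpha> \<beta> = 2 / (pi * Kfun \<alpha>) * arctan (\<beta> * tan (pi * \<alpha> / 2))"

definition theta_B :: "real \<Rightarrow> real \<Rightarrow> real" where
  "theta_B \<alpha> \<beta> = beta_B \<alpha> \<beta> * Kfun \<alpha> / \<alpha>"

definition psi :: "real \<Rightarrow> real \<Rightarrow> real \<Rightarrow> complex" where
  "psi z \<alpha> \<beta> =
    (if \<alpha> \<noteq> 1 then
       - complex_of_real (z powr \<alpha>) *
         exp (- \<i> * complex_of_real (pi / 2 * (\<beta> * Kfun \<alpha> / \<alpha>) * \<alpha>))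
     else
       - complex_of_real (pi / 2 * z) - \<i> * complex_of_real (\<beta> * z * ln z))"

definition h_fun :: "nat \<Rightarrow> real \<Rightarrow> real \<Rightarrow> real \<Rightarrow> complex" where
  "h_fun n x \<alpha> \<beta> =
    complex_of_real (1 / pi) *
    (LINT z:{0<..}|lborel. (\<i> * complex_of_real z) ^ n *
        exp (\<i> * complex_of_real (z * x) + psi z \<alpha> (- \<beta>)))"

end

theory Submission
  imports Defs "HOL-Real_Asymp.Real_Asymp"
begin

(* Both sides are integrals over (0, oo), and the substitution u = l z in the integral defining g
   turns its integrand into the real part of the integrand of h.  For alpha ~= 1 let
   phi = (pi/2) alpha theta_B = arctan (beta tan (pi alpha / 2)) and l = (cos phi) powr (1/alpha):
   then u^alpha = cos phi z^alpha and beta tan (pi alpha / 2) u^alpha = sin phi z^alpha, which are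
   the real and imaginary parts of z^alpha e^(i phi), the rotation built into psi.  For alpha = 1
   the choice l = pi/2 makes (2/pi) beta u log u equal to beta z log z + beta log (pi/2) z, whence
   the shift in y.  The normalising constants in front of h turn (i z)^(d-1) into a real
   multiple of z^(d-1), and since cos is even the phase may be multiplied by sign x (resp.
   sign beta), which is how |x| and beta_B sign x (resp. y sign beta and |beta|) arise.  All
   integrals converge because z^n exp (-a z^p) = o(z^-2). *)

lemma set_integrable_powr_minus_two:
  assumes "R > 0"
  shows "set_integrable lborel {R..} (\<lambda>x::real. x powr (-2))"
proof -
  have "(\<lambda>x::real. x powr (-2)) integrable_on {R..}"
    using has_integral_powr_to_inf[of "-2" R] assms by (auto simp: integrable_on_def)
  hence "(\<lambda>x::real. x powr (-2)) absolutely_integrable_on {R..}"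
    by (subst absolutely_integrable_on_iff_nonneg) auto
  thus ?thesis
    unfolding set_integrable_def by (subst (asm) integrable_completion) auto
qed

lemma set_integrable_power_exp_powr:
  fixes a p :: real and n :: nat
  assumes a: "a > 0" and p: "p > 0"
  shows "set_integrable lborel {0<..} (\<lambda>x. x ^ n * exp (- a * x powr p))"
proof -
  let ?f = "\<lambda>x::real. x ^ n * exp (- a * x powr p)"
  have "?f \<in> o(\<lambda>x. x powr (-2))"
    using a p by real_asymp
  hence "eventually (\<lambda>x. norm (?f x) \<le> 1 * norm (x powr (-2))) at_top"
    by (rule landau_o.smallD) simp
  then obtain R0 where R0: "\<And>x. x \<ge> R0 \<Longrightarrow> norm (?f x) \<le> norm (x powr (-2))"
    by (auto simp: eventually_at_top_linorder)
  define R where "R = max R0 1"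
  have R: "R > 0" "R \<ge> R0"
    by (auto simp: R_def)
  have tail: "set_integrable lborel {R..} ?f"
  proof (rule set_integrable_bound[OF set_integrable_powr_minus_two[OF R(1)]])
    show "AE x in lborel. x \<in> {R..} \<longrightarrow> norm (?f x) \<le> norm (x powr (-2))"
      using R0 R(2) by (intro AE_I2) auto
  qed (auto simp: set_borel_measurable_def)
  have head: "set_integrable lborel {0..R} ?f"
  proof (rule set_integrable_bound[where f = "\<lambda>_. R ^ n"])
    show "set_integrable lborel {0..R} (\<lambda>_. R ^ n)"
      by (rule borel_integrable_atLeastAtMost') (rule continuous_on_const)
    show "AE x in lborel. x \<in> {0..R} \<longrightarrow> norm (?f x) \<le> norm (R ^ n)"
    proof (intro AE_I2 impI)
      fix x assume x: "x \<in> {0..R}"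
      have "?f x \<le> R ^ n * 1"
        using x a by (intro mult_mono power_mono) auto
      thus "norm (?f x) \<le> norm (R ^ n)"
        using x R by simp
    qed
  qed (auto simp: set_borel_measurable_def)
  have "set_integrable lborel ({0..R} \<union> {R..}) ?f"
    by (rule set_integrable_Un[OF head tail]) auto
  thus ?thesis
    by (rule set_integrable_subset) auto
qed

lemma set_integral_Ioi_rescale:
  fixes f :: "real \<Rightarrow> real" and c :: real
  assumes c: "c > 0"
  shows "(LINT u:{0<..}|lborel. f u) = c * (LINT z:{0<..}|lborel. f (c * z))"
proof -
  have "(LINT u:{0<..}|lborel. f u)
      = \<bar>c\<bar> *\<^sub>R (\<integral>z. indicator {0<..} (0 + c * z) *\<^sub>R f (0 + c * z) \<partial>lborel)"
    unfolding set_lebesgue_integral_def using c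
    by (rule lborel_integral_real_affine[where t = 0, OF less_imp_neq[symmetric]])
  also have "(\<lambda>z. indicator {0<..} (0 + c * z) *\<^sub>R f (0 + c * z))
           = (\<lambda>z. indicator {0<..} z *\<^sub>R f (c * z))"
    using c by (auto simp: indicator_def zero_less_mult_iff)
  finally show ?thesis
    using c by (simp add: set_lebesgue_integral_def)
qed

lemma Re_set_integral_power_exp_Complex:
  fixes K :: complex and \<kappa> a p :: real and \<Phi> :: "real \<Rightarrow> real" and m :: nat
  assumes a: "a > 0" and p: "p > 0" and [measurable]: "\<Phi> \<in> borel_measurable borel"
    and K: "K * \<i> ^ m = of_real \<kappa>"
  shows "Re (K * (LINT z:{0<..}|lborel. (\<i> * of_real z) ^ m * exp (Complex (- a * z powr p) (\<Phi> z))))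
       = \<kappa> * (LINT z:{0<..}|lborel. cos (\<Phi> z) * z ^ m * exp (- a * z powr p))"
proof -
  define F where "F z = (\<i> * of_real z) ^ m * exp (Complex (- a * z powr p) (\<Phi> z))" for z
  have KF: "K * F z = of_real (\<kappa> * z ^ m) * exp (Complex (- a * z powr p) (\<Phi> z))" for z
    unfolding F_def power_mult_distrib using K
    by (simp add: ac_simps)
  have "set_integrable lborel {0<..} F"
  proof (rule set_integrable_bound[OF set_integrable_power_exp_powr[OF a p, of m]])
    show "set_borel_measurable lborel {0<..} F"
      unfolding set_borel_measurable_def F_def Complex_eq by measurable
    show "AE z in lborel. z \<in> {0<..} \<longrightarrow> norm (F z) \<le> norm (z ^ m * exp (- a * z powr p))"
      by (intro AE_I2) (simp add: F_def norm_mult norm_power norm_exp_eq_Re)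
  qed
  hence "set_integrable lborel {0<..} (\<lambda>z. K * F z)"
    by simp
  hence "Re (LINT z:{0<..}|lborel. K * F z) = (LINT z:{0<..}|lborel. Re (K * F z))"
    unfolding set_lebesgue_integral_def set_integrable_def
    by (subst integral_Re[symmetric]) simp_all
  hence "Re (K * (LINT z:{0<..}|lborel. F z)) = (LINT z:{0<..}|lborel. Re (K * F z))"
    by simp
  also have "\<dots> = (LINT z:{0<..}|lborel. \<kappa> * (cos (\<Phi> z) * z ^ m * exp (- a * z powr p)))"
    by (rule set_lebesgue_integral_cong) (auto simp: KF exp_Complex mult_ac)
  finally show ?thesis
    by (simp add: F_def)
qed

lemma sgnp_cases: "sgnp w = 1 \<or> sgnp w = -1"
  by (simp add: sgnp_def)

lemma abs_eq_sgnp_mult: "\<bar>w\<bar> = sgnp w * w"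
  by (simp add: sgnp_def)

lemma cos_sgnp_mult: "cos (sgnp w * u) = cos u"
  using sgnp_cases[of w] by auto

lemma exp_i_sgnp_mult: "exp (\<i> * of_real (sgnp w * u)) = Complex (cos u) (sgnp w * sin u)"
  using sgnp_cases[of w] by (auto simp: complex_eq_iff Re_exp Im_exp)

lemma cos_arctan_pos: "cos (arctan x) > 0"
  by (simp add: cos_arctan add_pos_nonneg)

lemma Kfun_nonzero:
  assumes "0 < \<alpha>" "\<alpha> < 2" "\<alpha> \<noteq> 1"
  shows "Kfun \<alpha> \<noteq> 0"
  using assms by (cases "\<alpha> < 1") (auto simp: Kfun_def sgn_if)

lemma theta_B_angle:
  assumes "0 < \<alpha>" "\<alpha> < 2" "\<alpha> \<noteq> 1"
  shows "pi / 2 * \<alpha> * theta_B \<alpha> \<beta> = arctan (\<beta> * tan (pi * \<alpha> / 2))"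
    and "pi / 2 * beta_B \<alpha> \<beta> * Kfun \<alpha> = arctan (\<beta> * tan (pi * \<alpha> / 2))"
  using Kfun_nonzero[OF assms] assms(1) by (simp_all add: theta_B_def beta_B_def field_simps)

lemma g_fun_alpha_ne_1_rescaled:
  assumes "\<alpha> \<noteq> 1" "\<alpha> > 0" "d \<ge> 1" and \<phi>: "\<phi> = arctan (\<beta> * tan (pi * \<alpha> / 2))"
  shows "g_fun \<alpha> d v \<beta> = cos \<phi> powr (d / \<alpha>) / (2 * pi) ^ d *
           (LINT z:{0<..}|lborel. cos (cos \<phi> powr (1 / \<alpha>) * v * z - sin \<phi> * z powr \<alpha>)
                                  * z ^ (d - 1) * exp (- cos \<phi> * z powr \<alpha>))"
proof -
  define t where "t = \<beta> * tan (pi * \<alpha> / 2)"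
  define c where "c = cos \<phi>"
  define l where "l = c powr (1 / \<alpha>)"
  have c: "c > 0"
    by (simp add: c_def \<phi> cos_arctan_pos)
  have sin_\<phi>: "sin \<phi> = t * c"
    by (simp add: c_def \<phi> t_def cos_arctan sin_arctan)
  have l: "l > 0" "l powr \<alpha> = c"
    using c \<open>\<alpha> > 0\<close> by (simp_all add: l_def powr_powr)
  have "l * l ^ (d - 1) = l ^ d"
    using \<open>d \<ge> 1\<close> by (simp add: power_Suc[symmetric])
  also have "\<dots> = c powr (d / \<alpha>)"
    using c l(1) by (simp add: l_def powr_powr flip: powr_realpow)
  finally have l_power: "l * l ^ (d - 1) = c powr (d / \<alpha>)" .
  have "g_fun \<alpha> d v \<beta> = 1 / (2 * pi) ^ d *
      (LINT u:{0<..}|lborel. cos (v * u - t * u powr \<alpha>) * u ^ (d - 1) * exp (- (u powr \<alpha>)))"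
    using \<open>\<alpha> \<noteq> 1\<close> by (simp add: g_fun_def t_def)
  also have "(LINT u:{0<..}|lborel. cos (v * u - t * u powr \<alpha>) * u ^ (d - 1) * exp (- (u powr \<alpha>)))
      = l * (LINT z:{0<..}|lborel. cos (v * (l * z) - t * (l * z) powr \<alpha>) * (l * z) ^ (d - 1)
                                   * exp (- ((l * z) powr \<alpha>)))"
    by (rule set_integral_Ioi_rescale[OF l(1)])
  also have "\<dots> = l * (LINT z:{0<..}|lborel. l ^ (d - 1) *
                     (cos (l * v * z - sin \<phi> * z powr \<alpha>) * z ^ (d - 1) * exp (- c * z powr \<alpha>)))"
    using l by (intro arg_cong[where f = "(*) l"] set_lebesgue_integral_cong)
               (auto simp: powr_mult sin_\<phi> power_mult_distrib algebra_simps)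
  finally show ?thesis
    using l_power by (simp add: c_def l_def mult.assoc)
qed

lemma Re_h_fun_alpha_ne_1:
  assumes "\<alpha> \<noteq> 1" "\<alpha> > 0" "d \<ge> 1" and c: "cos \<phi> > 0" and \<phi>: "\<phi> = pi / 2 * b * Kfun \<alpha>"
  shows "Re (of_real C / (2 ^ d * (of_real pi * \<i>) ^ (d - 1)) * h_fun (d - 1) \<bar>x\<bar> \<alpha> (b * sgnp x))
       = C / (2 * pi) ^ d *
           (LINT z:{0<..}|lborel. cos (x * z - sin \<phi> * z powr \<alpha>) * z ^ (d - 1) * exp (- cos \<phi> * z powr \<alpha>))"
proof -
  define \<Phi> where "\<Phi> z = sgnp x * (x * z - sin \<phi> * z powr \<alpha>)" for z
  have exponent: "\<i> * of_real (z * \<bar>x\<bar>) + psi z \<alpha> (- (b * sgnp x))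
      = Complex (- cos \<phi> * z powr \<alpha>) (\<Phi> z)" for z
  proof -
    have "psi z \<alpha> (- (b * sgnp x)) = - of_real (z powr \<alpha>) * exp (\<i> * of_real (sgnp x * \<phi>))"
      using assms(1,2) by (simp add: psi_def \<phi> algebra_simps)
    thus ?thesis
      unfolding exp_i_sgnp_mult abs_eq_sgnp_mult \<Phi>_def
      using sgnp_cases[of x] by (auto simp: complex_eq_iff algebra_simps)
  qed
  define K where "K = of_real C / (2 ^ d * (of_real pi * \<i>) ^ (d - 1)) * complex_of_real (1 / pi)"
  have "K * \<i> ^ (d - 1) = of_real (C / (2 * pi) ^ d)"
    using \<open>d \<ge> 1\<close> by (simp add: K_def power_mult_distrib power_Suc[symmetric] field_simps)
  from Re_set_integral_power_exp_Complex[OF c \<open>\<alpha> > 0\<close> _ this]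
  have "Re (K * (LINT z:{0<..}|lborel. (\<i> * of_real z) ^ (d - 1) * exp (Complex (- cos \<phi> * z powr \<alpha>) (\<Phi> z))))
      = C / (2 * pi) ^ d * (LINT z:{0<..}|lborel. cos (\<Phi> z) * z ^ (d - 1) * exp (- cos \<phi> * z powr \<alpha>))"
    by (simp add: \<Phi>_def)
  thus ?thesis
    unfolding h_fun_def exponent K_def \<Phi>_def cos_sgnp_mult by (simp only: mult.assoc)
qed

lemma g_fun_1_rescaled:
  assumes "d \<ge> 1"
  shows "g_fun 1 d v \<beta> = 1 / 4 ^ d *
           (LINT z:{0<..}|lborel. cos ((pi / 2 * v + \<beta> * ln (pi / 2)) * z + \<beta> * z * ln z)
                                  * z ^ (d - 1) * exp (- (pi / 2) * z))"
proof -
  define l where "l = pi / 2"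
  have l: "l > 0"
    by (simp add: l_def)
  have "l * l ^ (d - 1) / (2 * pi) ^ d = (l / (2 * pi)) ^ d"
    using \<open>d \<ge> 1\<close> by (simp add: power_divide power_Suc[symmetric])
  also have "\<dots> = 1 / 4 ^ d"
    by (simp add: l_def power_one_over)
  finally have l_power: "l * l ^ (d - 1) / (2 * pi) ^ d = 1 / 4 ^ d" .
  have phase: "v * (l * z) + 2 / pi * \<beta> * (l * z) * ln (l * z) = (l * v + \<beta> * ln l) * z + \<beta> * z * ln z"
    if "z > 0" for z
  proof -
    have "ln (l * z) = ln l + ln z"
      using that l by (simp add: ln_mult)
    thus ?thesis
      by (simp add: l_def algebra_simps)
  qed
  have "g_fun 1 d v \<beta> = 1 / (2 * pi) ^ d *
      (LINT u:{0<..}|lborel. cos (v * u + 2 / pi * \<beta> * u * ln u) * u ^ (d - 1) * exp (- u))"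
    by (simp add: g_fun_def)
  also have "(LINT u:{0<..}|lborel. cos (v * u + 2 / pi * \<beta> * u * ln u) * u ^ (d - 1) * exp (- u))
      = l * (LINT z:{0<..}|lborel. cos (v * (l * z) + 2 / pi * \<beta> * (l * z) * ln (l * z))
                                   * (l * z) ^ (d - 1) * exp (- (l * z)))"
    by (rule set_integral_Ioi_rescale[OF l])
  also have "\<dots> = l * (LINT z:{0<..}|lborel. l ^ (d - 1) *
                     (cos ((l * v + \<beta> * ln l) * z + \<beta> * z * ln z) * z ^ (d - 1) * exp (- l * z)))"
    by (intro arg_cong[where f = "(*) l"] set_lebesgue_integral_cong allI impI)
       (simp_all only: phase greaterThan_iff, simp_all add: power_mult_distrib)
  finally have "g_fun 1 d v \<beta> = l * l ^ (d - 1) / (2 * pi) ^ d *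
      (LINT z:{0<..}|lborel. cos ((l * v + \<beta> * ln l) * z + \<beta> * z * ln z) * z ^ (d - 1) * exp (- l * z))"
    by simp
  thus ?thesis
    unfolding l_power by (simp add: l_def)
qed

lemma Re_h_fun_1:
  assumes "d \<ge> 1"
  shows "Re (of_real pi / (4 ^ d * \<i> ^ (d - 1)) * h_fun (d - 1) (y * sgnp \<beta>) 1 \<bar>\<beta>\<bar>)
       = 1 / 4 ^ d *
           (LINT z:{0<..}|lborel. cos (y * z + \<beta> * z * ln z) * z ^ (d - 1) * exp (- (pi / 2) * z))"
proof -
  define \<Phi> where "\<Phi> z = sgnp \<beta> * (y * z + \<beta> * z * ln z)" for z
  have exponent: "\<i> * of_real (z * (y * sgnp \<beta>)) + psi z 1 (- \<bar>\<beta>\<bar>)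
      = Complex (- (pi / 2) * z powr 1) (\<Phi> z)" if "z > 0" for z
    using that sgnp_cases[of \<beta>] unfolding abs_eq_sgnp_mult \<Phi>_def
    by (auto simp: psi_def complex_eq_iff algebra_simps)
  define K where "K = of_real pi / (4 ^ d * \<i> ^ (d - 1)) * complex_of_real (1 / pi)"
  have "K * \<i> ^ (d - 1) = of_real (1 / 4 ^ d)"
    by (simp add: K_def)
  from Re_set_integral_power_exp_Complex[OF _ zero_less_one _ this, of "pi / 2"]
  have "Re (K * (LINT z:{0<..}|lborel. (\<i> * of_real z) ^ (d - 1) * exp (Complex (- (pi / 2) * z powr 1) (\<Phi> z))))
      = 1 / 4 ^ d * (LINT z:{0<..}|lborel. cos (\<Phi> z) * z ^ (d - 1) * exp (- (pi / 2) * z powr 1))"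
    by (simp add: \<Phi>_def)
  moreover have "(LINT z:{0<..}|lborel. (\<i> * of_real z) ^ (d - 1) * exp (Complex (- (pi / 2) * z powr 1) (\<Phi> z)))
      = (LINT z:{0<..}|lborel. (\<i> * of_real z) ^ (d - 1) * exp (\<i> * of_real (z * (y * sgnp \<beta>)) + psi z 1 (- \<bar>\<beta>\<bar>)))"
    by (intro set_lebesgue_integral_cong allI impI) (simp_all only: exponent greaterThan_iff, simp)
  moreover have "(LINT z:{0<..}|lborel. cos (\<Phi> z) * z ^ (d - 1) * exp (- (pi / 2) * z powr 1))
      = (LINT z:{0<..}|lborel. cos (y * z + \<beta> * z * ln z) * z ^ (d - 1) * exp (- (pi / 2) * z))"
    by (rule set_lebesgue_integral_cong) (auto simp: \<Phi>_def cos_sgnp_mult)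
  ultimately show ?thesis
    unfolding h_fun_def K_def by (simp only: mult.assoc)
qed

lemma g_fun_alpha_ne_1_eq_Re_h_fun:
  assumes "0 < \<alpha>" "\<alpha> < 2" "\<alpha> \<noteq> 1" "d \<ge> 1"
    and \<phi>_def: "\<phi> = pi / 2 * \<alpha> * theta_B \<alpha> \<beta>" and x_def: "x = cos \<phi> powr (1 / \<alpha>) * v"
  shows "g_fun \<alpha> d v \<beta> = Re (of_real (cos \<phi> powr (d / \<alpha>)) / (2 ^ d * (of_real pi * \<i>) ^ (d - 1))
                               * h_fun (d - 1) \<bar>x\<bar> \<alpha> (beta_B \<alpha> \<beta> * sgnp x))"
proof -
  have \<phi>: "\<phi> = arctan (\<beta> * tan (pi * \<alpha> / 2))" "\<phi> = pi / 2 * beta_B \<alpha> \<beta> * Kfun \<alpha>"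
    using theta_B_angle[OF assms(1-3)] by (simp_all add: \<phi>_def)
  have "cos \<phi> > 0"
    by (simp add: \<phi>(1) cos_arctan_pos)
  have "g_fun \<alpha> d v \<beta> = cos \<phi> powr (d / \<alpha>) / (2 * pi) ^ d *
           (LINT z:{0<..}|lborel. cos (x * z - sin \<phi> * z powr \<alpha>) * z ^ (d - 1) * exp (- cos \<phi> * z powr \<alpha>))"
    unfolding x_def by (rule g_fun_alpha_ne_1_rescaled[OF assms(3,1,4) \<phi>(1)])
  also have "\<dots> = Re (of_real (cos \<phi> powr (d / \<alpha>)) / (2 ^ d * (of_real pi * \<i>) ^ (d - 1))
                    * h_fun (d - 1) \<bar>x\<bar> \<alpha> (beta_B \<alpha> \<beta> * sgnp x))"
    by (rule Re_h_fun_alpha_ne_1[OF assms(3,1,4) \<open>cos \<phi> > 0\<close> \<phi>(2), symmetric])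
  finally show ?thesis .
qed

lemma g_fun_1_eq_Re_h_fun:
  assumes "d \<ge> 1" and y_def: "y = pi / 2 * v + \<beta> * ln (pi / 2)"
  shows "g_fun 1 d v \<beta> = Re (of_real pi / (4 ^ d * \<i> ^ (d - 1)) * h_fun (d - 1) (y * sgnp \<beta>) 1 \<bar>\<beta>\<bar>)"
  unfolding g_fun_1_rescaled[OF assms(1)] Re_h_fun_1[OF assms(1)] y_def ..

theorem proposition1:
  fixes \<alpha> \<beta> v :: real and d :: nat
  assumes "0 < \<alpha>" and "\<alpha> < 2" and "-1 \<le> \<beta>" and "\<beta> \<le> 1" and "1 \<le> d"
  shows "(\<alpha> \<noteq> 1 \<longrightarrow>
           (let x = (cos (pi / 2 * \<alpha> * theta_B \<alpha> \<beta>)) powr (1 / \<alpha>) * v in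
            g_fun \<alpha> d v \<beta> =
              Re (complex_of_real ((cos (pi / 2 * \<alpha> * theta_B \<alpha> \<beta>)) powr (real d / \<alpha>))
                  / (2 ^ d * (complex_of_real pi * \<i>) ^ (d - 1))
                  * h_fun (d - 1) \<bar>x\<bar> \<alpha> (beta_B \<alpha> \<beta> * sgnp x))))
       \<and> (\<alpha> = 1 \<longrightarrow>
           (let y = pi / 2 * v + \<beta> * ln (pi / 2) in
            g_fun \<alpha> d v \<beta> =
              Re (complex_of_real pi / (4 ^ d * \<i> ^ (d - 1))
                  * h_fun (d - 1) (y * sgnp \<beta>) 1 \<bar>\<beta>\<bar>)))"
  using assms unfolding Let_def
  by (metis g_fun_alpha_ne_1_eq_Re_h_fun g_fun_1_eq_Re_h_fun)

end
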